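(* Let $i\in\{1,\dots,N\}$, $k\ne y_i$, and $\delta>0$. If $u_i\le\log(1+e^{x_i^\top(w_k-w_{y_i})})-\delta$, then replacing $u_i$ by $\log(1+e^{x_i^\top(w_k-w_{y_i})})$ (keeping all other coordinates of $u$ and $W$ fixed) decreases $f(u,W)$ by at least $\delta^2/2$.
   Context: Data: $(y_i,x_i)$, $i=1,\dots,N$, $x_i\in\mathbb{R}^D$, $y_i\in\{1,\dots,K\}$, $K\ge 2$; $\mu\ge0$; $u\in\mathbb{R}^N$, $W=[w_1,\dots,w_K]\in\mathbb{R}^{D\times K}$ with Frobenius norm $\|W\|_2$; $$f(u,W)=\sum_{i=1}^N\Big[u_i+e^{-u_i}+\sum_{k\ne y_i}e^{x_i^\top(w_k-w_{y_i})-u_i}\Big]+\tfrac{\mu}{2}\|W\|_2^2.$$ *)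

theory Defs
  imports "HOL-Analysis.Analysis"
begin

text \<open>Samples indexed by 1..N, classes by 1..K;
  x i :: real^'d, y i \<in> {1..K}, W k = w_k :: real^'d, u i :: real.
  The squared Frobenius norm of W = [w_1..w_K] is the sum of squared norms of its columns.\<close>
definition obj :: "nat \<Rightarrow> nat \<Rightarrow> (nat \<Rightarrow> real^'d) \<Rightarrow> (nat \<Rightarrow> nat) \<Rightarrow> real
    \<Rightarrow> (nat \<Rightarrow> real) \<Rightarrow> (nat \<Rightarrow> real^'d) \<Rightarrow> real" where
  "obj N K x y \<mu> u W =
     (\<Sum>i=1..N. u i + exp (- u i)
        + (\<Sum>k\<in>{1..K} - {y i}. exp (x i \<bullet> (W k - W (y i)) - u i)))
     + \<mu> / 2 * (\<Sum>k=1..K. (norm (W k))\<^sup>2)"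

end

theory Submission
  imports Defs
begin

text \<open>For fixed W the objective is separable in u, and the i-th summand is
  v + c exp(-v) with c = 1 + sum over k ~= y i of exp(x_i^T (w_k - w_(y i))). Since
  c exp(-L) \<ge> 1 for L = log(1 + exp(x_i^T (w_k - w_(y i)))), raising v to L lowers the
  summand by at least exp t - 1 - t \<ge> t^2/2, where t = L - v \<ge> \<delta>.\<close>

lemma exp_shift_objective_decrease:
  fixes a c v \<delta> :: real
  assumes "a > 0" and "c \<ge> 1 + a" and "\<delta> \<ge> 0" and "v \<le> ln (1 + a) - \<delta>"
  shows "ln (1 + a) + c * exp (- ln (1 + a)) \<le> v + c * exp (- v) - \<delta>\<^sup>2 / 2"
proof -
  define L where "L = ln (1 + a)"
  define t where "t = L - v"
  have t_ge: "t \<ge> \<delta>" using assms(4) unfolding t_def L_def by simp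
  have exp_L: "exp (- L) * (1 + a) = 1"
    using assms(1) by (simp add: L_def exp_minus)
  have exp_v: "exp (- v) = exp t * exp (- L)"
    by (simp add: t_def flip: exp_add)
  have "exp (- L) \<le> exp (- v)" using t_ge assms(3) unfolding t_def by simp
  then have "(exp (- v) - exp (- L)) * (1 + a) \<le> (exp (- v) - exp (- L)) * c"
    using assms(2) by (intro mult_left_mono) auto
  moreover have "(exp (- v) - exp (- L)) * (1 + a) = exp t - 1"
    using exp_v exp_L by (simp add: algebra_simps)
  moreover have "exp t \<ge> 1 + t + t\<^sup>2 / 2"
    using t_ge assms(3) by (intro exp_lower_Taylor_quadratic) simp
  moreover have "\<delta>\<^sup>2 \<le> t\<^sup>2" using t_ge assms(3) by (intro power_mono) auto
  ultimately show ?thesis unfolding L_def[symmetric] t_def by (simp add: algebra_simps)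
qed

definition sample_loss :: "nat \<Rightarrow> (nat \<Rightarrow> real^'d) \<Rightarrow> (nat \<Rightarrow> nat) \<Rightarrow> (nat \<Rightarrow> real^'d)
    \<Rightarrow> nat \<Rightarrow> real \<Rightarrow> real" where
  "sample_loss K x y W j v =
     v + exp (- v) + (\<Sum>k\<in>{1..K} - {y j}. exp (x j \<bullet> (W k - W (y j)) - v))"

lemma obj_eq_sum_sample_loss:
  "obj N K x y \<mu> u W = (\<Sum>j=1..N. sample_loss K x y W j (u j)) + \<mu> / 2 * (\<Sum>k=1..K. (norm (W k))\<^sup>2)"
  unfolding obj_def sample_loss_def ..

lemma sample_loss_eq:
  "sample_loss K x y W j v = v + (1 + (\<Sum>k\<in>{1..K} - {y j}. exp (x j \<bullet> (W k - W (y j))))) * exp (- v)"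
  by (simp add: sample_loss_def exp_diff exp_minus sum_distrib_left field_simps)

lemma obj_update_diff:
  assumes "i \<in> {1..N}"
  shows "obj N K x y \<mu> (u(i := v)) W - obj N K x y \<mu> u W
           = sample_loss K x y W i v - sample_loss K x y W i (u i)"
proof -
  have "(\<Sum>j=1..N. sample_loss K x y W j ((u(i := v)) j))
          = sample_loss K x y W i v + (\<Sum>j\<in>{1..N} - {i}. sample_loss K x y W j (u j))"
    using assms by (simp add: sum.remove[of _ i])
  moreover have "(\<Sum>j=1..N. sample_loss K x y W j (u j))
          = sample_loss K x y W i (u i) + (\<Sum>j\<in>{1..N} - {i}. sample_loss K x y W j (u j))"
    using assms by (simp add: sum.remove[of _ i])
  ultimately show ?thesis by (simp add: obj_eq_sum_sample_loss)
qed

theorem lemma5: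
  fixes N K :: nat and x :: "nat \<Rightarrow> real^'d" and y :: "nat \<Rightarrow> nat"
    and \<mu> :: real and u :: "nat \<Rightarrow> real" and W :: "nat \<Rightarrow> real^'d"
    and i k :: nat and \<delta> :: real
  assumes "K \<ge> 2" and "\<mu> \<ge> 0"
    and "\<forall>j\<in>{1..N}. y j \<in> {1..K}"
    and "i \<in> {1..N}" and "k \<in> {1..K}" and "k \<noteq> y i"
    and "\<delta> > 0"
    and "u i \<le> ln (1 + exp (x i \<bullet> (W k - W (y i)))) - \<delta>"
  shows "obj N K x y \<mu> (u(i := ln (1 + exp (x i \<bullet> (W k - W (y i)))))) W
           \<le> obj N K x y \<mu> u W - \<delta>\<^sup>2 / 2"
proof -
  define a where "a = exp (x i \<bullet> (W k - W (y i)))"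
  define S where "S = (\<Sum>j\<in>{1..K} - {y i}. exp (x i \<bullet> (W j - W (y i))))"
  have "a \<le> S"
    unfolding a_def S_def using assms(5,6) by (intro member_le_sum) auto
  then have "sample_loss K x y W i (ln (1 + a)) \<le> sample_loss K x y W i (u i) - \<delta>\<^sup>2 / 2"
    unfolding sample_loss_eq S_def[symmetric]
    using exp_shift_objective_decrease[of a "1 + S" \<delta> "u i"] assms(7,8)
    by (simp add: a_def)
  then show ?thesis
    using obj_update_diff[OF assms(4), of K x y \<mu> u "ln (1 + a)" W] by (simp add: a_def)
qed

end
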